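(* Let $n\ge 1$ and let $N$ be a fixed positive integer, and let $0<\alpha<N$. Let $\mu$ be a positive Radon measure on $\mathbb{R}^n$ satisfying the growth condition: there is a constant $C_\mu$ such that $\mu(B(x,r))\le C_\mu r^N$ for all $x\in\mathbb{R}^n$ and $r>0$. For a measurable function $f$ on $\mathbb{R}^n$ let $$I_\alpha f(x)=\int_{\mathbb{R}^n}\frac{f(y)\,d\mu(y)}{|x-y|^{N-\alpha}},\qquad M_\alpha f(x)=\sup_{r>0}\frac{1}{\mu(B(x,r))^{\frac{N-\alpha}{N}}}\int_{B(x,r)}|f(y)|\,d\mu(y).$$ Then there exist constants $k\ge 1$ and $C$ such that for every $\lambda>0$ and every $\epsilon$ with $0<\epsilon\le 1$, $$\mu\left(\{x: I_\alpha f(x)>k\lambda,\ M_\alpha f(x)\le \epsilon\lambda\}\right)\le C\,\epsilon^{\frac{N}{N-\alpha}}\,\mu\left(\{x: I_\alpha f(x)>\lambda\}\right).$$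
   Context: $B(x,r)$ denotes the open Euclidean ball of center $x$ and radius $r$, and $|x-y|$ is the Euclidean distance. $I_\alpha f$ is the Riesz potential of order $\alpha$ of $f$ with respect to $\mu$, and $M_\alpha f$ is the fractional maximal function of $f$ with respect to $\mu$. The measure $\mu$ need not be doubling. *)

theory Defs
  imports "HOL-Analysis.Analysis"
begin

text \<open>Riesz potential of order alpha (with exponent N) of a nonnegative function f
  with respect to mu; the kernel 1/|x-y|^(N-alpha) is taken in ennreal, so it is
  infinite on the diagonal.\<close>
definition riesz_potential ::
  "'a::euclidean_space measure \<Rightarrow> nat \<Rightarrow> real \<Rightarrow> ('a \<Rightarrow> real) \<Rightarrow> 'a \<Rightarrow> ennreal" where
  "riesz_potential \<mu> N \<alpha> f x =
     (\<integral>\<^sup>+ y. ennreal (f y) / ennreal (dist x y powr (real N - \<alpha>)) \<partial>\<mu>)"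

definition frac_maximal ::
  "'a::euclidean_space measure \<Rightarrow> nat \<Rightarrow> real \<Rightarrow> ('a \<Rightarrow> real) \<Rightarrow> 'a \<Rightarrow> ennreal" where
  "frac_maximal \<mu> N \<alpha> f x =
     (SUP r\<in>{0<..}. (\<integral>\<^sup>+ y\<in>ball x r. ennreal \<bar>f y\<bar> \<partial>\<mu>)
        / ennreal (measure \<mu> (ball x r) powr ((real N - \<alpha>) / real N)))"

end

theory Submission
  imports Defs
begin

text \<open>The growth bound \<open>\<mu>(B(x, r)) \<le> C r^N\<close> alone makes \<open>I\<^sub>\<alpha>\<close> of weak type
  \<open>(1, N / (N - \<alpha>))\<close>. Take \<open>x\<close> with \<open>I\<^sub>\<alpha> f x > k \<lambda>\<close> and \<open>M\<^sub>\<alpha> f x \<le> \<epsilon> \<lambda>\<close>, and let \<open>d\<close> be its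
  distance to the closed set \<open>{I\<^sub>\<alpha> f \<le> \<lambda>}\<close>. Along the radii \<open>d / 10^(i+1)\<close> the measure of the
  balls around \<open>x\<close> must at some step drop by at most the factor \<open>100^N\<close>: otherwise the bound
  on \<open>M\<^sub>\<alpha> f x\<close> turns the shells into a convergent geometric series and \<open>I\<^sub>\<alpha> f x\<close> would be
  \<open>O(\<lambda>)\<close>. At the first such radius \<open>10 \<rho>\<close>, every point of \<open>B(x, 5 \<rho>)\<close> sees \<open>f\<close> outside
  \<open>B(x, 10 \<rho>)\<close> with potential \<open>O(\<lambda>)\<close>, so large values come from \<open>f\<close> restricted to
  \<open>B(x, 10 \<rho>)\<close>; the weak type bound together with doubling at that scale confines them to a
  set of measure \<open>O(\<epsilon>^(N/(N-\<alpha>)) \<mu>(B(x, \<rho>)))\<close>. The balls \<open>B(x, \<rho>)\<close> lie in \<open>{I\<^sub>\<alpha> f > \<lambda>}\<close>, and a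
  Vitali covering adds up the local estimates.\<close>

section \<open>Geometric series and Vitali coverings\<close>

lemma geometric_shell_exists:
  fixes d r q :: real
  assumes "0 < d" "d < r" "0 < q" "q < 1"
  shows "\<exists>i. r * q ^ Suc i \<le> d \<and> d < r * q ^ i"
proof -
  have r: "r > 0" using assms by linarith
  obtain n where "q ^ n < d / r" using real_arch_pow_inv[of "d / r" q] assms r by auto
  then have "r * q ^ n \<le> d" using r by (simp add: field_simps)
  moreover have "r * q ^ Suc n \<le> r * q ^ n"
    using assms r by (intro mult_left_mono power_decreasing) auto
  ultimately have ex: "\<exists>i. r * q ^ Suc i \<le> d" by (meson order_trans)
  define i where "i = (LEAST i. r * q ^ Suc i \<le> d)"
  have "r * q ^ Suc i \<le> d" unfolding i_def by (rule LeastI_ex[OF ex])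
  moreover have "d < r * q ^ i"
  proof (cases i)
    case (Suc k)
    then have "\<not> r * q ^ Suc k \<le> d" unfolding i_def by (metis lessI not_less_Least)
    then show ?thesis using Suc by simp
  qed (use assms in simp)
  ultimately show ?thesis by blast
qed

lemma suminf_ennreal_geometric:
  fixes a q :: real
  assumes "0 \<le> a" "0 \<le> q" "q < 1"
  shows "(\<Sum>i. ennreal (a * q ^ i)) = ennreal (a / (1 - q))"
  using assms geometric_sums[of q] sums_mult[of "\<lambda>i. q ^ i" "1 / (1 - q)" a]
  by (intro suminf_ennreal_eq) auto

lemma nn_integral_indicator_le_cover:
  fixes g :: "'a \<Rightarrow> ennreal"
  assumes [measurable]: "g \<in> borel_measurable M" "A \<in> sets M" "\<And>i. S i \<in> sets M"
    and cover: "B \<subseteq> A \<union> (\<Union>i. S i)"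
  shows "(\<integral>\<^sup>+x. indicator B x * g x \<partial>M)
    \<le> (\<integral>\<^sup>+x. indicator A x * g x \<partial>M) + (\<Sum>i. \<integral>\<^sup>+x. indicator (S i) x * g x \<partial>M)"
proof -
  have "indicator B x * g x \<le> indicator A x * g x + (\<Sum>i. indicator (S i) x * g x)" for x
  proof -
    consider "x \<notin> B" | "x \<in> A" | i where "x \<in> S i" using cover by blast
    then show ?thesis
    proof cases
      case 2
      then show ?thesis by (simp add: add_increasing2 indicator_def)
    next
      case 3
      then have "g x \<le> (\<Sum>i. indicator (S i) x * g x)"
        using sum_le_suminf[OF summableI, of "{i}" "\<lambda>i. indicator (S i) x * g x"] by simp
      then show ?thesis by (simp add: add_increasing indicator_def)
    qed simp
  qed
  then have "(\<integral>\<^sup>+x. indicator B x * g x \<partial>M)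
      \<le> (\<integral>\<^sup>+x. indicator A x * g x + (\<Sum>i. indicator (S i) x * g x) \<partial>M)"
    by (intro nn_integral_mono)
  also have "\<dots> = (\<integral>\<^sup>+x. indicator A x * g x \<partial>M) + (\<Sum>i. \<integral>\<^sup>+x. indicator (S i) x * g x \<partial>M)"
    by (subst nn_integral_add) (auto intro!: nn_integral_suminf simp del: ennreal_suminf_multc)
  finally show ?thesis .
qed

lemma emeasure_UN_countable_le:
  assumes [measurable]: "\<And>i. i \<in> I \<Longrightarrow> X i \<in> sets M" and I: "countable I"
  shows "emeasure M (\<Union>(X ` I)) \<le> (\<integral>\<^sup>+i. emeasure M (X i) \<partial>count_space I)"
proof -
  have le: "indicator (\<Union>(X ` I)) x \<le> (\<integral>\<^sup>+i. indicator (X i) x \<partial>count_space I)" for x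
  proof (cases "x \<in> \<Union>(X ` I)")
    case True
    then obtain j where j: "j \<in> I" "x \<in> X j" by blast
    have "(\<integral>\<^sup>+i. indicator {j} i \<partial>count_space I) \<le> (\<integral>\<^sup>+i. indicator (X i) x \<partial>count_space I)"
      using j by (intro nn_integral_mono) (auto split: split_indicator)
    then show ?thesis using True j by (simp add: nn_integral_count_space_indicator)
  qed simp
  note sets.countable_UN'[OF I, unfolded subset_eq, measurable]
  have "emeasure M (\<Union>(X ` I)) = (\<integral>\<^sup>+x. indicator (\<Union>(X ` I)) x \<partial>M)" by simp
  also have "\<dots> \<le> (\<integral>\<^sup>+x. \<integral>\<^sup>+i. indicator (X i) x \<partial>count_space I \<partial>M)"
    by (intro nn_integral_mono le)
  also have "\<dots> = (\<integral>\<^sup>+i. emeasure M (X i) \<partial>count_space I)"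
    using I by (simp add: nn_integral_count_space_nn_integral cong: nn_integral_cong_simp)
  finally show ?thesis .
qed

lemma emeasure_UN_le_via_disjoint_family:
  fixes K :: ennreal
  assumes C: "countable C"
    and [measurable]: "\<And>c. c \<in> C \<Longrightarrow> G c \<in> sets M" "\<And>c. c \<in> C \<Longrightarrow> B c \<in> sets M" "\<Omega> \<in> sets M"
    and disj: "disjoint_family_on B C" and sub: "\<And>c. c \<in> C \<Longrightarrow> B c \<subseteq> \<Omega>"
    and le: "\<And>c. c \<in> C \<Longrightarrow> emeasure M (G c) \<le> K * emeasure M (B c)"
  shows "emeasure M (\<Union>(G ` C)) \<le> K * emeasure M \<Omega>"
proof -
  have "emeasure M (\<Union>(G ` C)) \<le> (\<integral>\<^sup>+c. emeasure M (G c) \<partial>count_space C)"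
    using C by (intro emeasure_UN_countable_le) auto
  also have "\<dots> \<le> (\<integral>\<^sup>+c. K * emeasure M (B c) \<partial>count_space C)"
    by (intro nn_integral_mono le) simp
  also have "\<dots> = K * emeasure M (\<Union>(B ` C))"
    using C disj by (simp add: nn_integral_cmult emeasure_UN_countable)
  also have "\<dots> \<le> K * emeasure M \<Omega>"
    using C sub by (intro mult_left_mono emeasure_mono sets.countable_UN'') auto
  finally show ?thesis .
qed

lemma emeasure_le_Vitali_bounded:
  fixes M :: "'a::euclidean_space measure" and K :: ennreal
  assumes balls: "\<And>x r. ball x r \<in> sets M" and \<Omega>: "\<Omega> \<in> sets M"
    and \<rho>: "\<And>x. x \<in> S \<Longrightarrow> 0 < \<rho> x \<and> \<rho> x \<le> B \<and> ball x (\<rho> x) \<subseteq> \<Omega>"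
    and G: "\<And>x. x \<in> S \<Longrightarrow> G x \<in> sets M \<and> S \<inter> ball x (5 * \<rho> x) \<subseteq> G x
      \<and> emeasure M (G x) \<le> K * emeasure M (ball x (\<rho> x))"
  shows "emeasure M S \<le> K * emeasure M \<Omega>"
proof -
  obtain C where C: "countable C" "C \<subseteq> S"
      "pairwise (\<lambda>i j. disjnt (ball i (\<rho> i)) (ball j (\<rho> j))) C" "S \<subseteq> (\<Union>i\<in>C. ball i (5 * \<rho> i))"
  proof (rule Vitali_covering_lemma_balls[where a = "\<lambda>x. x" and K = S and r = \<rho> and B = B])
    show "S \<subseteq> (\<Union>i\<in>S. ball i (\<rho> i))" using \<rho> by force
  qed (use \<rho> in auto)
  then have "S \<subseteq> \<Union>(G ` C)" using G by blast
  moreover have "\<Union>(G ` C) \<in> sets M" using C G by (intro sets.countable_UN'') auto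
  ultimately have "emeasure M S \<le> emeasure M (\<Union>(G ` C))" by (rule emeasure_mono)
  also have "\<dots> \<le> K * emeasure M \<Omega>"
  proof (rule emeasure_UN_le_via_disjoint_family[where B = "\<lambda>x. ball x (\<rho> x)"])
    show "disjoint_family_on (\<lambda>x. ball x (\<rho> x)) C"
      using C(3) by (auto simp: disjoint_family_on_def pairwise_def disjnt_def)
    fix c assume "c \<in> C"
    then have "c \<in> S" using C(2) by blast
    then show "G c \<in> sets M" "ball c (\<rho> c) \<subseteq> \<Omega>"
      "emeasure M (G c) \<le> K * emeasure M (ball c (\<rho> c))" using G \<rho> by auto
  qed (use C(1) balls \<Omega> in auto)
  finally show ?thesis .
qed

lemma emeasure_le_Vitali:
  fixes M :: "'a::euclidean_space measure" and K :: ennreal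
  assumes balls: "\<And>x r. ball x r \<in> sets M" and \<Omega>: "\<Omega> \<in> sets M" and S: "S \<in> sets M"
    and \<rho>: "\<And>x. x \<in> S \<Longrightarrow> 0 < \<rho> x \<and> \<rho> x \<le> B + norm x \<and> ball x (\<rho> x) \<subseteq> \<Omega>"
    and G: "\<And>x. x \<in> S \<Longrightarrow> G x \<in> sets M \<and> S \<inter> ball x (5 * \<rho> x) \<subseteq> G x
      \<and> emeasure M (G x) \<le> K * emeasure M (ball x (\<rho> x))"
  shows "emeasure M S \<le> K * emeasure M \<Omega>"
proof -
  have le: "emeasure M (S \<inter> ball 0 (real n)) \<le> K * emeasure M \<Omega>" for n
  proof (rule emeasure_le_Vitali_bounded[OF balls \<Omega>, where \<rho> = \<rho> and G = G and B = "B + real n"])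
    fix x assume x: "x \<in> S \<inter> ball 0 (real n)"
    then show "0 < \<rho> x \<and> \<rho> x \<le> B + real n \<and> ball x (\<rho> x) \<subseteq> \<Omega>"
      using \<rho>[of x] by (auto simp: dist_norm)
    show "G x \<in> sets M \<and> S \<inter> ball 0 (real n) \<inter> ball x (5 * \<rho> x) \<subseteq> G x
        \<and> emeasure M (G x) \<le> K * emeasure M (ball x (\<rho> x))"
      using G[of x] x by blast
  qed
  have "x \<in> (\<Union>n. ball 0 (real n))" for x :: 'a
    using reals_Archimedean2[of "norm x"] by auto
  then have U: "(\<Union>n. S \<inter> ball 0 (real n)) = S" by blast
  have "incseq (\<lambda>n. S \<inter> ball 0 (real n))" by (auto simp: incseq_def)
  then have "(SUP n. emeasure M (S \<inter> ball 0 (real n))) = emeasure M S"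
    using S balls by (subst U[symmetric], intro SUP_emeasure_incseq) auto
  moreover have "(SUP n. emeasure M (S \<inter> ball 0 (real n))) \<le> K * emeasure M \<Omega>"
    by (rule SUP_least) (rule le)
  ultimately show ?thesis by simp
qed

section \<open>Measures with polynomial growth\<close>

locale growth_measure =
  fixes \<mu> :: "'a::euclidean_space measure" and N :: nat and C\<^sub>\<mu> :: real
  assumes N_pos: "N \<ge> 1"
    and sets_eq_borel: "sets \<mu> = sets borel"
    and growth_const_pos: "C\<^sub>\<mu> > 0"
    and emeasure_ball_le: "\<And>x r. r > 0 \<Longrightarrow> emeasure \<mu> (ball x r) \<le> ennreal (C\<^sub>\<mu> * r ^ N)"
begin

lemma space_eq_UNIV [simp]: "space \<mu> = UNIV"
  using sets_eq_imp_space_eq[OF sets_eq_borel] by simp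

lemmas [measurable_cong] = sets_eq_borel

lemma sets_of_borel [measurable]: "A \<in> sets borel \<Longrightarrow> A \<in> sets \<mu>"
  by (simp add: sets_eq_borel)

lemma measurable_borel_iff: "f \<in> borel_measurable \<mu> \<longleftrightarrow> f \<in> borel_measurable borel"
  by (simp add: measurable_cong_sets[OF sets_eq_borel refl])

lemma emeasure_ball_finite: "emeasure \<mu> (ball x r) < \<infinity>"
proof (cases "r > 0")
  case True
  then show ?thesis using emeasure_ball_le[OF True, of x] by (simp add: le_less_trans)
qed (simp add: ball_empty)

lemma emeasure_ball_eq: "emeasure \<mu> (ball x r) = ennreal (measure \<mu> (ball x r))"
  using emeasure_ball_finite[of x r] by (simp add: emeasure_eq_ennreal_measure less_top)

lemma measure_ball_le: "r > 0 \<Longrightarrow> measure \<mu> (ball x r) \<le> C\<^sub>\<mu> * r ^ N"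
  using emeasure_ball_le[of r x] growth_const_pos by (simp add: emeasure_ball_eq)

lemma measure_ball_powr_le:
  assumes "r > 0" "s \<ge> 0"
  shows "measure \<mu> (ball x r) powr (s / N) \<le> C\<^sub>\<mu> powr (s / N) * r powr s"
proof -
  have "measure \<mu> (ball x r) powr (s / N) \<le> (C\<^sub>\<mu> * r ^ N) powr (s / N)"
    using measure_ball_le[OF assms(1)] assms by (intro powr_mono2) auto
  also have "\<dots> = C\<^sub>\<mu> powr (s / N) * (r powr N) powr (s / N)"
    using assms growth_const_pos by (simp add: powr_mult powr_realpow)
  also have "(r powr N) powr (s / N) = r powr s"
    using N_pos by (simp add: powr_powr)
  finally show ?thesis .
qed

lemma emeasure_singleton: "emeasure \<mu> {x} = 0"
proof -
  have "measure \<mu> {x} \<le> e" if e: "e > 0" for e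
  proof -
    define r where "r = min 1 (e / C\<^sub>\<mu>)"
    have r: "r > 0" "r \<le> 1" "r \<le> e / C\<^sub>\<mu>" using e growth_const_pos by (auto simp: r_def)
    have "measure \<mu> {x} \<le> measure \<mu> (ball x r)"
      using r emeasure_ball_finite by (intro measure_mono_fmeasurable) (auto simp: fmeasurable_def)
    also have "\<dots> \<le> C\<^sub>\<mu> * r ^ N" by (rule measure_ball_le[OF r(1)])
    also have "\<dots> \<le> C\<^sub>\<mu> * r ^ 1"
      using r N_pos growth_const_pos by (intro mult_left_mono power_decreasing) auto
    also have "\<dots> \<le> e" using r growth_const_pos by (simp add: field_simps)
    finally show ?thesis .
  qed
  then have "measure \<mu> {x} \<le> 0" by (rule field_le_epsilon) simp
  moreover have "emeasure \<mu> {x} \<le> emeasure \<mu> (ball x 1)" by (intro emeasure_mono) auto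
  then have "emeasure \<mu> {x} < \<infinity>" using emeasure_ball_finite[of x 1] by (rule le_less_trans)
  ultimately show ?thesis by (simp add: emeasure_eq_ennreal_measure measure_le_0_iff less_top)
qed

lemma singleton_null_sets: "{x} \<in> null_sets \<mu>"
  using emeasure_singleton by (simp add: null_sets_def)

lemma nn_integral_indicator_singleton: "(\<integral>\<^sup>+y. indicator {x} y * g y \<partial>\<mu>) = 0"
  using nn_integral_null_set[OF singleton_null_sets[of x], of g] by (simp add: mult.commute)

lemma sigma_finite: "sigma_finite_measure \<mu>"
proof
  show "\<exists>A. countable A \<and> A \<subseteq> sets \<mu> \<and> \<Union> A = space \<mu> \<and> (\<forall>a\<in>A. emeasure \<mu> a \<noteq> \<infinity>)"
  proof (intro exI[of _ "range (\<lambda>n::nat. ball 0 (real n))"] conjI)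
    have "x \<in> (\<Union>n. ball 0 (real n))" for x :: 'a
      using reals_Archimedean2[of "norm x"] by auto
    then show "\<Union> (range (\<lambda>n::nat. ball 0 (real n))) = space \<mu>" by auto
  qed (use emeasure_ball_finite in \<open>auto simp: less_top\<close>)
qed

end

section \<open>The Riesz kernel\<close>

locale riesz_growth = growth_measure +
  fixes \<alpha> :: real
  assumes alpha_pos: "0 < \<alpha>" and alpha_less_N: "\<alpha> < real N"
begin

abbreviation \<beta> :: real where "\<beta> \<equiv> real N - \<alpha>"

lemma beta_pos: "\<beta> > 0"
  using alpha_less_N by simp

abbreviation I\<^sub>\<alpha> :: "('a \<Rightarrow> real) \<Rightarrow> 'a \<Rightarrow> ennreal" where
  "I\<^sub>\<alpha> \<equiv> riesz_potential \<mu> N \<alpha>"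

abbreviation M\<^sub>\<alpha> :: "('a \<Rightarrow> real) \<Rightarrow> 'a \<Rightarrow> ennreal" where
  "M\<^sub>\<alpha> \<equiv> frac_maximal \<mu> N \<alpha>"

definition riesz_kernel :: "('a \<Rightarrow> real) \<Rightarrow> 'a \<Rightarrow> 'a \<Rightarrow> ennreal" where
  "riesz_kernel f x y = ennreal (f y) / ennreal (dist x y powr \<beta>)"

lemma riesz_potential_eq: "I\<^sub>\<alpha> f x = (\<integral>\<^sup>+y. riesz_kernel f x y \<partial>\<mu>)"
  by (simp add: riesz_potential_def riesz_kernel_def)

lemma sets_pair_eq_borel: "sets (\<mu> \<Otimes>\<^sub>M \<mu>) = sets (borel :: ('a \<times> 'a) measure)"
  by (metis sets_pair_measure_cong[OF sets_eq_borel sets_eq_borel] borel_prod)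

lemma measurable_pair_borel:
  "h \<in> borel_measurable borel \<Longrightarrow> h \<in> borel_measurable (\<mu> \<Otimes>\<^sub>M \<mu>)"
  using measurable_cong_sets[OF sets_pair_eq_borel refl] by blast

lemma measurable_riesz_kernel_pair [measurable]:
  assumes [measurable]: "f \<in> borel_measurable borel"
  shows "(\<lambda>z. riesz_kernel f (fst z) (snd z)) \<in> borel_measurable (\<mu> \<Otimes>\<^sub>M \<mu>)"
proof (rule measurable_pair_borel)
  have "(snd :: 'a \<times> 'a \<Rightarrow> 'a) \<in> borel_measurable borel"
    by (intro borel_measurable_continuous_onI continuous_intros)
  from measurable_compose[OF this assms]
  have [measurable]: "(\<lambda>z::'a \<times> 'a. f (snd z)) \<in> borel_measurable borel"
    by (simp add: comp_def)
  have "(\<lambda>z::'a \<times> 'a. dist (fst z) (snd z)) \<in> borel_measurable borel"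
    by (intro borel_measurable_continuous_onI continuous_intros)
  then have [measurable]: "(\<lambda>z::'a \<times> 'a. dist (fst z) (snd z) powr \<beta>) \<in> borel_measurable borel"
    by measurable
  show "(\<lambda>z. riesz_kernel f (fst z) (snd z)) \<in> borel_measurable borel"
    unfolding riesz_kernel_def by measurable
qed

lemma measurable_riesz_kernel [measurable]:
  "f \<in> borel_measurable borel \<Longrightarrow> riesz_kernel f x \<in> borel_measurable \<mu>"
  using measurable_Pair2[OF measurable_riesz_kernel_pair, of f x] by simp

lemma measurable_riesz_kernel_left [measurable]:
  "f \<in> borel_measurable borel \<Longrightarrow> (\<lambda>x. riesz_kernel f x y) \<in> borel_measurable \<mu>"
  using measurable_Pair1[OF measurable_riesz_kernel_pair, of f y] by simp

lemma measurable_riesz_potential [measurable]: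
  "f \<in> borel_measurable borel \<Longrightarrow> I\<^sub>\<alpha> f \<in> borel_measurable \<mu>"
  unfolding riesz_potential_eq[abs_def]
  using sigma_finite_measure.borel_measurable_nn_integral[OF sigma_finite, of "riesz_kernel f" \<mu>]
  by simp

lemma riesz_kernel_indicator:
  "indicator A y * riesz_kernel f x y = riesz_kernel (\<lambda>y. indicator A y * f y) x y"
  by (simp add: riesz_kernel_def indicator_def)

lemma riesz_kernel_le:
  assumes "0 < a" "a \<le> dist x y" "0 \<le> f y"
  shows "riesz_kernel f x y \<le> ennreal (f y / a powr \<beta>)"
proof -
  have "0 < dist x y" using assms by linarith
  then have "0 < dist x y powr \<beta>" by simp
  then have "riesz_kernel f x y = ennreal (f y / dist x y powr \<beta>)"
    unfolding riesz_kernel_def using assms(3) by (simp add: divide_ennreal)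
  also have "f y / dist x y powr \<beta> \<le> f y / a powr \<beta>"
    using assms beta_pos by (intro divide_left_mono powr_mono2 mult_pos_pos) auto
  finally show ?thesis by (simp add: ennreal_leI)
qed

lemma riesz_kernel_le_rescaled:
  assumes "0 < dist x y" "dist z y \<le> c * dist x y" "0 < c" "0 \<le> f y"
  shows "riesz_kernel f x y \<le> ennreal (c powr \<beta>) * riesz_kernel f z y"
proof (cases "dist z y = 0")
  case True
  then show ?thesis
    using assms by (cases "f y = 0") (auto simp: riesz_kernel_def ennreal_divide_eq_top_iff ennreal_mult_top)
next
  case False
  then have z: "dist z y > 0" by simp
  have "dist z y powr \<beta> \<le> (c * dist x y) powr \<beta>" using assms beta_pos by (intro powr_mono2) auto
  also have "\<dots> = c powr \<beta> * dist x y powr \<beta>" using assms by (simp add: powr_mult)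
  finally have "f y / dist x y powr \<beta> \<le> c powr \<beta> * (f y / dist z y powr \<beta>)"
    using assms z by (simp add: field_simps mult_left_mono)
  then show ?thesis
    using assms z by (simp add: riesz_kernel_def divide_ennreal ennreal_mult[symmetric] ennreal_leI)
qed

lemma riesz_kernel_tendsto:
  assumes "0 \<le> f y" "xs \<longlonglongrightarrow> x" "y \<noteq> x"
  shows "(\<lambda>n. riesz_kernel f (xs n) y) \<longlonglongrightarrow> riesz_kernel f x y"
proof -
  have d: "dist x y > 0" using assms by simp
  have dist_lim: "(\<lambda>n. dist (xs n) y) \<longlonglongrightarrow> dist x y" using assms by (intro tendsto_intros)
  have lim: "(\<lambda>n. ennreal (f y / dist (xs n) y powr \<beta>)) \<longlonglongrightarrow> ennreal (f y / dist x y powr \<beta>)"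
    using dist_lim d assms by (intro tendsto_ennrealI tendsto_intros) auto
  have "eventually (\<lambda>n. dist (xs n) y > 0) sequentially"
    using order_tendstoD(1)[OF dist_lim d] .
  then have "eventually (\<lambda>n. ennreal (f y / dist (xs n) y powr \<beta>) = riesz_kernel f (xs n) y) sequentially"
    by eventually_elim (simp add: riesz_kernel_def divide_ennreal assms)
  moreover have "riesz_kernel f x y = ennreal (f y / dist x y powr \<beta>)"
    using d assms by (simp add: riesz_kernel_def divide_ennreal)
  ultimately show ?thesis using Lim_transform_eventually[OF lim] by simp
qed

lemma closed_riesz_potential_le:
  assumes [measurable]: "f \<in> borel_measurable borel" and f: "\<And>y. f y \<ge> 0"
  shows "closed {x. I\<^sub>\<alpha> f x \<le> c}"
  unfolding closed_sequential_limits
proof safe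
  fix xs x assume xs: "\<forall>n. xs n \<in> {x. I\<^sub>\<alpha> f x \<le> c}" and lim: "xs \<longlonglongrightarrow> x"
  have "riesz_kernel f x y = liminf (\<lambda>n. riesz_kernel f (xs n) y)" if "y \<noteq> x" for y
    using f lim that by (intro lim_imp_Liminf[symmetric] riesz_kernel_tendsto) auto
  then have "AE y in \<mu>. riesz_kernel f x y = liminf (\<lambda>n. riesz_kernel f (xs n) y)"
    by (intro AE_I'[OF singleton_null_sets[of x]]) auto
  then have "I\<^sub>\<alpha> f x = (\<integral>\<^sup>+y. liminf (\<lambda>n. riesz_kernel f (xs n) y) \<partial>\<mu>)"
    unfolding riesz_potential_eq by (rule nn_integral_cong_AE)
  also have "\<dots> \<le> liminf (\<lambda>n. I\<^sub>\<alpha> f (xs n))"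
    unfolding riesz_potential_eq by (rule nn_integral_liminf) measurable
  also have "\<dots> \<le> c" using xs by (intro Liminf_le) auto
  finally show "I\<^sub>\<alpha> f x \<le> c" .
qed

lemma nn_integral_annulus_riesz_kernel_le:
  assumes u: "u > 0"
  shows "(\<integral>\<^sup>+x. indicator (ball y u - ball y (u / 2)) x * riesz_kernel (\<lambda>_. 1) x y \<partial>\<mu>)
    \<le> ennreal (C\<^sub>\<mu> * 2 powr \<beta> * u powr \<alpha>)"
proof -
  have "(\<integral>\<^sup>+x. indicator (ball y u - ball y (u / 2)) x * riesz_kernel (\<lambda>_. 1) x y \<partial>\<mu>)
      \<le> (\<integral>\<^sup>+x. ennreal (1 / (u / 2) powr \<beta>) * indicator (ball y u) x \<partial>\<mu>)"
  proof (intro nn_integral_mono)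
    fix x
    show "indicator (ball y u - ball y (u / 2)) x * riesz_kernel (\<lambda>_. 1) x y
        \<le> ennreal (1 / (u / 2) powr \<beta>) * indicator (ball y u) x"
      using riesz_kernel_le[of "u / 2" x y "\<lambda>_. 1"] u
      by (auto simp: dist_commute split: split_indicator)
  qed
  also have "\<dots> = ennreal (1 / (u / 2) powr \<beta>) * emeasure \<mu> (ball y u)"
    by (simp add: nn_integral_cmult_indicator)
  also have "\<dots> \<le> ennreal (1 / (u / 2) powr \<beta>) * ennreal (C\<^sub>\<mu> * u ^ N)"
    using emeasure_ball_le[OF u] by (rule mult_left_mono) simp
  also have "\<dots> = ennreal (C\<^sub>\<mu> * 2 powr \<beta> * u powr \<alpha>)"
  proof -
    have "u ^ N = u powr \<beta> * u powr \<alpha>" using u by (simp add: powr_realpow flip: powr_add)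
    then have "1 / (u / 2) powr \<beta> * (C\<^sub>\<mu> * u ^ N) = C\<^sub>\<mu> * 2 powr \<beta> * u powr \<alpha>"
      using u by (simp add: powr_divide)
    then show ?thesis using u growth_const_pos by (simp flip: ennreal_mult)
  qed
  finally show ?thesis .
qed

definition ball_kernel_const :: real where
  "ball_kernel_const = C\<^sub>\<mu> * 2 powr \<beta> / (1 - (1 / 2) powr \<alpha>)"

lemma half_powr_alpha_less_1: "(1 / 2 :: real) powr \<alpha> < 1"
proof -
  have "1 < (2::real) powr \<alpha>" using alpha_pos by (intro gr_one_powr) auto
  then show ?thesis by (simp add: powr_divide)
qed

lemma ball_kernel_const_pos: "ball_kernel_const > 0"
  using growth_const_pos half_powr_alpha_less_1 by (simp add: ball_kernel_const_def)

lemma nn_integral_ball_riesz_kernel_le: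
  assumes \<delta>: "\<delta> > 0"
  shows "(\<integral>\<^sup>+x. indicator (ball y \<delta>) x * riesz_kernel (\<lambda>_. 1) x y \<partial>\<mu>)
    \<le> ennreal (ball_kernel_const * \<delta> powr \<alpha>)"
proof -
  define u where "u i = \<delta> * (1 / 2) ^ i" for i :: nat
  define S where "S i = ball y (u i) - ball y (u i / 2)" for i
  have u: "u i > 0" for i using \<delta> by (simp add: u_def)
  have "(\<integral>\<^sup>+x. indicator (ball y \<delta>) x * riesz_kernel (\<lambda>_. 1) x y \<partial>\<mu>)
      \<le> (\<integral>\<^sup>+x. indicator {y} x * riesz_kernel (\<lambda>_. 1) x y \<partial>\<mu>)
        + (\<Sum>i. \<integral>\<^sup>+x. indicator (S i) x * riesz_kernel (\<lambda>_. 1) x y \<partial>\<mu>)"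
  proof (rule nn_integral_indicator_le_cover)
    show "ball y \<delta> \<subseteq> {y} \<union> (\<Union>i. S i)"
    proof
      fix x assume x: "x \<in> ball y \<delta>"
      show "x \<in> {y} \<union> (\<Union>i. S i)"
      proof (cases "x = y")
        case False
        then obtain i where "\<delta> * (1 / 2) ^ Suc i \<le> dist y x" "dist y x < \<delta> * (1 / 2) ^ i"
          using geometric_shell_exists[of "dist y x" \<delta> "1 / 2"] x by auto
        then have "x \<in> S i" by (simp add: S_def u_def)
        then show ?thesis by blast
      qed simp
    qed
  qed (auto simp: S_def)
  also have "(\<integral>\<^sup>+x. indicator {y} x * riesz_kernel (\<lambda>_. 1) x y \<partial>\<mu>) = 0"
    by (rule nn_integral_indicator_singleton)
  also have "(\<Sum>i. \<integral>\<^sup>+x. indicator (S i) x * riesz_kernel (\<lambda>_. 1) x y \<partial>\<mu>)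
      \<le> (\<Sum>i. ennreal (C\<^sub>\<mu> * 2 powr \<beta> * \<delta> powr \<alpha> * ((1 / 2) powr \<alpha>) ^ i))"
  proof (intro suminf_le summableI)
    fix i
    have "(\<integral>\<^sup>+x. indicator (S i) x * riesz_kernel (\<lambda>_. 1) x y \<partial>\<mu>)
        \<le> ennreal (C\<^sub>\<mu> * 2 powr \<beta> * u i powr \<alpha>)"
      unfolding S_def by (rule nn_integral_annulus_riesz_kernel_le[OF u])
    also have "u i powr \<alpha> = \<delta> powr \<alpha> * ((1 / 2) powr \<alpha>) ^ i"
      using \<delta> by (simp add: u_def powr_mult powr_powr mult.commute flip: powr_realpow)
    finally show "(\<integral>\<^sup>+x. indicator (S i) x * riesz_kernel (\<lambda>_. 1) x y \<partial>\<mu>)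
        \<le> ennreal (C\<^sub>\<mu> * 2 powr \<beta> * \<delta> powr \<alpha> * ((1 / 2) powr \<alpha>) ^ i)"
      by (simp add: mult.assoc)
  qed
  also have "\<dots> = ennreal (ball_kernel_const * \<delta> powr \<alpha>)"
    using growth_const_pos half_powr_alpha_less_1
    by (subst suminf_ennreal_geometric) (auto simp: ball_kernel_const_def)
  finally show ?thesis by simp
qed

lemma riesz_kernel_eq_mult: "riesz_kernel f x y = ennreal (f y) * riesz_kernel (\<lambda>_. 1) x y"
  by (simp add: riesz_kernel_def divide_ennreal_def)

lemma measurable_indicator_ball_pair [measurable]:
  "(\<lambda>z. indicator (ball (fst z) \<delta>) (snd z) :: ennreal) \<in> borel_measurable (\<mu> \<Otimes>\<^sub>M \<mu>)"
proof -
  have "open {z::'a \<times> 'a. dist (fst z) (snd z) < \<delta>}"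
    by (intro open_Collect_less continuous_intros)
  then have "(\<lambda>z. indicator {z::'a \<times> 'a. dist (fst z) (snd z) < \<delta>} z :: ennreal) \<in> borel_measurable borel"
    by (intro borel_measurable_indicator) auto
  moreover have "(\<lambda>z. indicator (ball (fst z) \<delta>) (snd z) :: ennreal)
      = (\<lambda>z. indicator {z::'a \<times> 'a. dist (fst z) (snd z) < \<delta>} z)"
    by (auto simp: indicator_def fun_eq_iff)
  ultimately show ?thesis using measurable_pair_borel by simp
qed

section \<open>Weak type estimate\<close>

definition local_riesz_potential :: "real \<Rightarrow> ('a \<Rightarrow> real) \<Rightarrow> 'a \<Rightarrow> ennreal" where
  "local_riesz_potential \<delta> g x = (\<integral>\<^sup>+y. indicator (ball x \<delta>) y * riesz_kernel g x y \<partial>\<mu>)"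

lemma measurable_local_riesz_potential [measurable]:
  "g \<in> borel_measurable borel \<Longrightarrow> local_riesz_potential \<delta> g \<in> borel_measurable \<mu>"
  unfolding local_riesz_potential_def[abs_def]
  using sigma_finite_measure.borel_measurable_nn_integral[OF sigma_finite,
      of "\<lambda>x y. indicator (ball x \<delta>) y * riesz_kernel g x y" \<mu>]
  by simp

lemma riesz_potential_le_local:
  assumes [measurable]: "g \<in> borel_measurable borel" and "\<And>y. g y \<ge> 0" and "\<delta> > 0"
  shows "I\<^sub>\<alpha> g x \<le> local_riesz_potential \<delta> g x + ennreal (1 / \<delta> powr \<beta>) * (\<integral>\<^sup>+y. g y \<partial>\<mu>)"
proof -
  have "I\<^sub>\<alpha> g x \<le> (\<integral>\<^sup>+y. indicator (ball x \<delta>) y * riesz_kernel g x y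
      + ennreal (1 / \<delta> powr \<beta>) * ennreal (g y) \<partial>\<mu>)"
    unfolding riesz_potential_eq
  proof (intro nn_integral_mono)
    fix y
    show "riesz_kernel g x y \<le> indicator (ball x \<delta>) y * riesz_kernel g x y
        + ennreal (1 / \<delta> powr \<beta>) * ennreal (g y)"
    proof (cases "y \<in> ball x \<delta>")
      case False
      then have "riesz_kernel g x y \<le> ennreal (g y / \<delta> powr \<beta>)"
        using assms by (intro riesz_kernel_le) auto
      also have "\<dots> = ennreal (1 / \<delta> powr \<beta>) * ennreal (g y)"
        using assms by (simp flip: ennreal_mult)
      finally show ?thesis using False by simp
    qed simp
  qed
  also have "\<dots> = local_riesz_potential \<delta> g x + ennreal (1 / \<delta> powr \<beta>) * (\<integral>\<^sup>+y. g y \<partial>\<mu>)"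
    by (simp add: local_riesz_potential_def nn_integral_add nn_integral_cmult)
  finally show ?thesis .
qed

lemma nn_integral_local_riesz_potential_le:
  assumes [measurable]: "g \<in> borel_measurable borel" and \<delta>: "\<delta> > 0"
  shows "(\<integral>\<^sup>+x. local_riesz_potential \<delta> g x \<partial>\<mu>)
    \<le> ennreal (ball_kernel_const * \<delta> powr \<alpha>) * (\<integral>\<^sup>+y. g y \<partial>\<mu>)"
proof -
  interpret pair_sigma_finite \<mu> \<mu>
    by (intro pair_sigma_finite.intro sigma_finite)
  have "(\<integral>\<^sup>+x. local_riesz_potential \<delta> g x \<partial>\<mu>)
      = (\<integral>\<^sup>+y. \<integral>\<^sup>+x. indicator (ball x \<delta>) y * riesz_kernel g x y \<partial>\<mu> \<partial>\<mu>)"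
    unfolding local_riesz_potential_def by (rule Fubini'[symmetric]) (simp add: case_prod_beta')
  also have "\<dots> = (\<integral>\<^sup>+y. ennreal (g y)
      * (\<integral>\<^sup>+x. indicator (ball y \<delta>) x * riesz_kernel (\<lambda>_. 1) x y \<partial>\<mu>) \<partial>\<mu>)"
    by (subst nn_integral_cmult[symmetric])
      (auto simp: riesz_kernel_eq_mult[of g] dist_commute mult.left_commute indicator_def
        intro!: nn_integral_cong)
  also have "\<dots> \<le> (\<integral>\<^sup>+y. ennreal (g y) * ennreal (ball_kernel_const * \<delta> powr \<alpha>) \<partial>\<mu>)"
    by (intro nn_integral_mono mult_left_mono nn_integral_ball_riesz_kernel_le \<delta>) simp
  also have "\<dots> = ennreal (ball_kernel_const * \<delta> powr \<alpha>) * (\<integral>\<^sup>+y. g y \<partial>\<mu>)"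
    by (simp add: nn_integral_multc mult.commute)
  finally show ?thesis .
qed

lemma emeasure_local_riesz_potential_ge_le:
  assumes [measurable]: "g \<in> borel_measurable borel" and \<delta>: "\<delta> > 0" and c: "c > 0"
  shows "emeasure \<mu> {x. ennreal c \<le> local_riesz_potential \<delta> g x}
    \<le> ennreal (ball_kernel_const * \<delta> powr \<alpha> / c) * (\<integral>\<^sup>+y. g y \<partial>\<mu>)"
proof -
  have "{x. ennreal c \<le> local_riesz_potential \<delta> g x}
      \<subseteq> {x \<in> space \<mu>. 1 \<le> ennreal (1 / c) * local_riesz_potential \<delta> g x}"
  proof safe
    fix x assume "ennreal c \<le> local_riesz_potential \<delta> g x"
    then have "ennreal (1 / c) * ennreal c \<le> ennreal (1 / c) * local_riesz_potential \<delta> g x"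
      by (rule mult_left_mono) simp
    then show "1 \<le> ennreal (1 / c) * local_riesz_potential \<delta> g x" using c by (simp flip: ennreal_mult)
  qed simp
  then have "emeasure \<mu> {x. ennreal c \<le> local_riesz_potential \<delta> g x}
      \<le> emeasure \<mu> {x \<in> space \<mu>. 1 \<le> ennreal (1 / c) * local_riesz_potential \<delta> g x}"
    by (intro emeasure_mono) measurable
  also have "\<dots> \<le> ennreal (1 / c) * (\<integral>\<^sup>+x. local_riesz_potential \<delta> g x \<partial>\<mu>)"
    using nn_integral_Markov_inequality[of "local_riesz_potential \<delta> g" "space \<mu>" \<mu> "ennreal (1 / c)"]
    by simp
  also have "\<dots> \<le> ennreal (1 / c) * (ennreal (ball_kernel_const * \<delta> powr \<alpha>) * (\<integral>\<^sup>+y. g y \<partial>\<mu>))"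
    by (intro mult_left_mono nn_integral_local_riesz_potential_le \<delta>) simp_all
  also have "\<dots> = ennreal (ball_kernel_const * \<delta> powr \<alpha> / c) * (\<integral>\<^sup>+y. g y \<partial>\<mu>)"
    using c ball_kernel_const_pos by (subst mult.assoc[symmetric]) (simp flip: ennreal_mult)
  finally show ?thesis .
qed

lemma riesz_potential_eq_0:
  assumes [measurable]: "g \<in> borel_measurable borel" and "(\<integral>\<^sup>+y. g y \<partial>\<mu>) = 0"
  shows "I\<^sub>\<alpha> g x = 0"
proof -
  have "AE y in \<mu>. ennreal (g y) = 0" using assms by (simp add: nn_integral_0_iff_AE)
  then have "AE y in \<mu>. riesz_kernel g x y = 0" by eventually_elim (simp add: riesz_kernel_def)
  then show ?thesis by (simp add: riesz_potential_eq nn_integral_0_iff_AE)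
qed

definition weak_type_const :: real where
  "weak_type_const = 2 powr (N / \<beta>) * ball_kernel_const"

lemma weak_type_const_pos: "weak_type_const > 0"
  using ball_kernel_const_pos by (simp add: weak_type_const_def)

lemma local_riesz_potential_ge_half:
  assumes [measurable]: "g \<in> borel_measurable borel" and g: "\<And>y. g y \<ge> 0" and \<delta>: "\<delta> > 0"
    and s: "s > 0" and tail: "ennreal (1 / \<delta> powr \<beta>) * (\<integral>\<^sup>+y. g y \<partial>\<mu>) \<le> ennreal (s / 2)"
    and I: "I\<^sub>\<alpha> g x > ennreal s"
  shows "ennreal (s / 2) \<le> local_riesz_potential \<delta> g x"
proof (rule ccontr)
  assume "\<not> ennreal (s / 2) \<le> local_riesz_potential \<delta> g x"
  then have "local_riesz_potential \<delta> g x + ennreal (1 / \<delta> powr \<beta>) * (\<integral>\<^sup>+y. g y \<partial>\<mu>)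
      \<le> ennreal (s / 2) + ennreal (s / 2)"
    using tail by (intro add_mono) simp_all
  also have "\<dots> = ennreal s" using s by (simp flip: ennreal_plus)
  finally show False using riesz_potential_le_local[OF assms(1) g \<delta>, of x] I by simp
qed

lemma weak_type_const_eq:
  assumes "A > 0" "s > 0"
  shows "ball_kernel_const * ((2 * A / s) powr (1 / \<beta>)) powr \<alpha> / (s / 2) * A
    = weak_type_const * (A / s) powr (N / \<beta>)"
proof -
  have e: "N / \<beta> = 1 + \<alpha> / \<beta>" using beta_pos by (simp add: field_simps)
  have "((2 * A / s) powr (1 / \<beta>)) powr \<alpha> = (2 * (A / s)) powr (\<alpha> / \<beta>)" by (simp add: powr_powr)
  also have "\<dots> = 2 powr (\<alpha> / \<beta>) * (A / s) powr (\<alpha> / \<beta>)"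
    using assms powr_mult[of 2 "A / s" "\<alpha> / \<beta>"] by simp
  finally have "ball_kernel_const * ((2 * A / s) powr (1 / \<beta>)) powr \<alpha> / (s / 2) * A
      = ball_kernel_const * (2 * 2 powr (\<alpha> / \<beta>)) * ((A / s) * (A / s) powr (\<alpha> / \<beta>))"
    by (simp add: field_simps)
  also have "2 * 2 powr (\<alpha> / \<beta>) = 2 powr (N / \<beta>)" using e by (simp add: powr_add)
  also have "(A / s) * (A / s) powr (\<alpha> / \<beta>) = (A / s) powr (N / \<beta>)"
    using e assms by (simp add: powr_add)
  finally show ?thesis by (simp add: weak_type_const_def)
qed

text \<open>The radius \<open>\<delta>\<close> below is chosen so that the part of the potential coming from outside
  \<open>B(x, \<delta>)\<close> is at most \<open>s / 2\<close>.\<close>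

lemma emeasure_riesz_potential_gt_le:
  assumes [measurable]: "g \<in> borel_measurable borel" and g: "\<And>y. g y \<ge> 0"
    and A: "(\<integral>\<^sup>+y. g y \<partial>\<mu>) \<le> ennreal A" and s: "s > 0"
  shows "emeasure \<mu> {x. I\<^sub>\<alpha> g x > ennreal s} \<le> ennreal (weak_type_const * (A / s) powr (N / \<beta>))"
proof (cases "(\<integral>\<^sup>+y. g y \<partial>\<mu>) = 0")
  case True
  then show ?thesis by (simp add: riesz_potential_eq_0)
next
  case False
  then have A_pos: "A > 0" using A by (metis ennreal_eq_0_iff le_zero_eq not_le)
  define \<delta> where "\<delta> = (2 * A / s) powr (1 / \<beta>)"
  have \<delta>: "\<delta> > 0" using A_pos s by (simp add: \<delta>_def)
  have "\<delta> powr \<beta> = 2 * A / s" using A_pos s beta_pos by (simp add: \<delta>_def powr_powr)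
  then have "ennreal (1 / \<delta> powr \<beta>) * ennreal A = ennreal (s / 2)"
    using A_pos s by (simp flip: ennreal_mult)
  then have tail: "ennreal (1 / \<delta> powr \<beta>) * (\<integral>\<^sup>+y. g y \<partial>\<mu>) \<le> ennreal (s / 2)"
    using A by (metis mult_left_mono zero_le)
  have "emeasure \<mu> {x. I\<^sub>\<alpha> g x > ennreal s}
      \<le> emeasure \<mu> {x. ennreal (s / 2) \<le> local_riesz_potential \<delta> g x}"
    using local_riesz_potential_ge_half[OF _ g \<delta> s tail] by (intro emeasure_mono) auto
  also have "\<dots> \<le> ennreal (ball_kernel_const * \<delta> powr \<alpha> / (s / 2)) * (\<integral>\<^sup>+y. g y \<partial>\<mu>)"
    using s by (intro emeasure_local_riesz_potential_ge_le \<delta>) auto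
  also have "\<dots> \<le> ennreal (ball_kernel_const * \<delta> powr \<alpha> / (s / 2)) * ennreal A"
    using A by (rule mult_left_mono) simp
  also have "\<dots> = ennreal (weak_type_const * (A / s) powr (N / \<beta>))"
    using A_pos s ball_kernel_const_pos weak_type_const_eq[OF A_pos s]
    by (simp add: \<delta>_def flip: ennreal_mult)
  finally show ?thesis .
qed

section \<open>The fractional maximal function\<close>

lemma nn_integral_ball_le_frac_maximal:
  assumes M: "M\<^sub>\<alpha> f x \<le> ennreal c" and "c \<ge> 0" "\<rho> > 0" "\<And>y. f y \<ge> 0"
  shows "(\<integral>\<^sup>+y. indicator (ball x \<rho>) y * ennreal (f y) \<partial>\<mu>)
    \<le> ennreal (c * measure \<mu> (ball x \<rho>) powr (\<beta> / N))"
proof -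
  define a where "a = (\<integral>\<^sup>+y\<in>ball x \<rho>. ennreal \<bar>f y\<bar> \<partial>\<mu>)"
  define m where "m = measure \<mu> (ball x \<rho>)"
  have a: "(\<integral>\<^sup>+y. indicator (ball x \<rho>) y * ennreal (f y) \<partial>\<mu>) = a"
    unfolding a_def using assms by (intro nn_integral_cong) (auto simp: mult.commute)
  have "a / ennreal (m powr (\<beta> / N)) \<le> M\<^sub>\<alpha> f x"
    unfolding frac_maximal_def a_def m_def using \<open>\<rho> > 0\<close> by (intro SUP_upper) auto
  then have le: "a / ennreal (m powr (\<beta> / N)) \<le> ennreal c" using M by (rule order_trans)
  show ?thesis
  proof (cases "m = 0")
    case True
    then have "ball x \<rho> \<in> null_sets \<mu>" by (simp add: m_def emeasure_ball_eq null_sets_def)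
    then show ?thesis unfolding a a_def by (simp add: nn_integral_null_set)
  next
    case False
    then have "m > 0" by (simp add: m_def order_le_neq_trans)
    then have "a = a / ennreal (m powr (\<beta> / N)) * ennreal (m powr (\<beta> / N))"
      by (simp add: ennreal_divide_times)
    also have "\<dots> \<le> ennreal c * ennreal (m powr (\<beta> / N))" using le by (rule mult_right_mono) simp
    finally show ?thesis using a \<open>c \<ge> 0\<close> by (simp add: m_def ennreal_mult)
  qed
qed

lemma nn_integral_le_frac_maximal:
  assumes [measurable]: "f \<in> borel_measurable borel" and f: "\<And>y. f y \<ge> 0"
    and M: "M\<^sub>\<alpha> f x \<le> ennreal c" and c: "c \<ge> 0" and fin: "emeasure \<mu> UNIV < \<infinity>"
  shows "(\<integral>\<^sup>+y. f y \<partial>\<mu>) \<le> ennreal (c * measure \<mu> UNIV powr (\<beta> / N))"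
proof -
  define h where "h n y = indicator (ball x (real (Suc n))) y * ennreal (f y)" for n y
  have [measurable]: "h n \<in> borel_measurable \<mu>" for n unfolding h_def by measurable
  have inc: "incseq h" unfolding incseq_def le_fun_def h_def by (auto split: split_indicator)
  have pointwise: "ennreal (f y) = (SUP n. h n y)" for y
  proof (rule antisym)
    obtain n where "dist x y < real (Suc n)"
      by (metis less_Suc_eq of_nat_less_iff less_trans reals_Archimedean2)
    then show "ennreal (f y) \<le> (SUP n. h n y)" unfolding h_def by (intro SUP_upper2[of n]) auto
    show "(SUP n. h n y) \<le> ennreal (f y)" by (auto simp: h_def intro!: SUP_least split: split_indicator)
  qed
  have "(\<integral>\<^sup>+y. f y \<partial>\<mu>) = (\<integral>\<^sup>+y. (SUP n. h n y) \<partial>\<mu>)" by (simp only: pointwise)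
  also have "\<dots> = (SUP n. integral\<^sup>N \<mu> (h n))"
    using inc by (rule nn_integral_monotone_convergence_SUP) measurable
  also have "\<dots> \<le> ennreal (c * measure \<mu> UNIV powr (\<beta> / N))"
  proof (rule SUP_least)
    fix n
    have "integral\<^sup>N \<mu> (h n) \<le> ennreal (c * measure \<mu> (ball x (real (Suc n))) powr (\<beta> / N))"
      unfolding h_def using M c f by (intro nn_integral_ball_le_frac_maximal) auto
    also have "\<dots> \<le> ennreal (c * measure \<mu> UNIV powr (\<beta> / N))"
      using fin c beta_pos
      by (intro ennreal_leI mult_left_mono powr_mono2 measure_mono_fmeasurable)
        (auto simp: fmeasurable_def)
    finally show "integral\<^sup>N \<mu> (h n) \<le> ennreal (c * measure \<mu> UNIV powr (\<beta> / N))" .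
  qed
  finally show ?thesis .
qed

section \<open>Doubling radii\<close>

definition radius :: "real \<Rightarrow> nat \<Rightarrow> real" where
  "radius d i = d / 10 ^ Suc i"

text \<open>Losing the factor \<open>100^N\<close> in mass from one radius to the next divides
  \<open>\<mu>(B)^((N-\<alpha>)/N)\<close> by \<open>100^(N-\<alpha>)\<close>, while the kernel only grows by \<open>10^(N-\<alpha>)\<close>;
  hence \<open>decay_ratio\<close>.\<close>

definition doubling_const :: real where
  "doubling_const = 100 ^ N"

definition doubling_fails :: "'a \<Rightarrow> real \<Rightarrow> nat \<Rightarrow> bool" where
  "doubling_fails x d l \<longleftrightarrow>
     doubling_const * measure \<mu> (ball x (radius d (Suc l))) < measure \<mu> (ball x (radius d l))"

definition decay_ratio :: real where
  "decay_ratio = (1 / 10) powr \<beta>"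

lemma radius_pos [simp]: "d > 0 \<Longrightarrow> radius d i > 0"
  by (simp add: radius_def)

lemma radius_Suc: "radius d (Suc i) = radius d i / 10"
  by (simp add: radius_def)

lemma radius_antimono: "d > 0 \<Longrightarrow> i \<le> j \<Longrightarrow> radius d j \<le> radius d i"
  unfolding radius_def by (intro divide_left_mono power_increasing) auto

lemma decay_ratio_pos: "decay_ratio > 0"
  by (simp add: decay_ratio_def)

lemma decay_ratio_less_1: "decay_ratio < 1"
proof -
  have "1 < (10::real) powr \<beta>" using beta_pos by (intro gr_one_powr) auto
  then show ?thesis by (simp add: decay_ratio_def powr_divide)
qed

lemma ball_minus_center_subset_shells:
  assumes "d > 0"
  shows "ball x (radius d 0) - {x} \<subseteq> (\<Union>i. ball x (radius d i) - ball x (radius d (Suc i)))"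
proof
  fix y assume y: "y \<in> ball x (radius d 0) - {x}"
  have geometric: "radius d i = radius d 0 * (1 / 10) ^ i" for i
    by (simp add: radius_def field_simps)
  obtain i where "radius d 0 * (1 / 10) ^ Suc i \<le> dist x y" "dist x y < radius d 0 * (1 / 10) ^ i"
    using geometric_shell_exists[of "dist x y" "radius d 0" "1 / 10"] y by auto
  then show "y \<in> (\<Union>i. ball x (radius d i) - ball x (radius d (Suc i)))"
    by (metis geometric UN_iff UNIV_I Diff_iff mem_ball not_less)
qed

lemma ball_measure_decay:
  assumes d: "d > 0" and fails: "\<forall>l<i. doubling_fails x d l"
  shows "measure \<mu> (ball x (radius d i)) powr (\<beta> / N) / radius d (Suc i) powr \<beta>
    \<le> decay_ratio ^ i * (10 powr \<beta> * C\<^sub>\<mu> powr (\<beta> / N))"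
  using fails
proof (induction i)
  case 0
  have r: "radius d (Suc 0) powr \<beta> = radius d 0 powr \<beta> / 10 powr \<beta>"
    by (simp add: radius_Suc powr_divide)
  have pos: "radius d 0 powr \<beta> > 0" using radius_pos[OF d, of 0] by simp
  have "measure \<mu> (ball x (radius d 0)) powr (\<beta> / N) / radius d (Suc 0) powr \<beta>
      \<le> C\<^sub>\<mu> powr (\<beta> / N) * radius d 0 powr \<beta> / radius d (Suc 0) powr \<beta>"
    using d beta_pos by (intro divide_right_mono measure_ball_powr_le radius_pos) auto
  also have "\<dots> = 10 powr \<beta> * C\<^sub>\<mu> powr (\<beta> / N)" using pos by (simp add: r)
  finally show ?case by simp
next
  case (Suc i)
  define a where "a = measure \<mu> (ball x (radius d i)) powr (\<beta> / N)"
  define b where "b = measure \<mu> (ball x (radius d (Suc i))) powr (\<beta> / N)"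
  define p where "p = radius d (Suc i) powr \<beta>"
  define q :: real where "q = 10 powr \<beta>"
  have pq: "p > 0" "q > 0" using radius_pos[OF d, of "Suc i"] by (simp_all add: p_def q_def)
  have "doubling_const * measure \<mu> (ball x (radius d (Suc i))) \<le> measure \<mu> (ball x (radius d i))"
    using Suc.prems by (auto simp: doubling_fails_def less_imp_le)
  then have "(doubling_const * measure \<mu> (ball x (radius d (Suc i)))) powr (\<beta> / N) \<le> a"
    unfolding a_def using beta_pos by (intro powr_mono2) (auto simp: doubling_const_def)
  moreover have "doubling_const powr (\<beta> / N) = q * q"
    using N_pos by (simp add: doubling_const_def q_def powr_powr powr_mult[symmetric] flip: powr_realpow)
  ultimately have "q * (q * b) \<le> a"
    by (simp add: b_def powr_mult doubling_const_def mult.assoc)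
  then have "b / (p / q) \<le> (1 / q) * (a / p)" using pq by (simp add: field_simps)
  also have "\<dots> \<le> (1 / q) * (decay_ratio ^ i * (10 powr \<beta> * C\<^sub>\<mu> powr (\<beta> / N)))"
    using Suc pq by (intro mult_left_mono) (simp_all add: a_def p_def)
  also have "1 / q = decay_ratio" by (simp add: decay_ratio_def q_def powr_divide)
  also have "p / q = radius d (Suc (Suc i)) powr \<beta>"
    by (simp add: p_def q_def radius_Suc[of d "Suc i"] powr_divide)
  finally show ?case by (simp add: b_def mult.assoc)
qed

section \<open>Localization of the potential\<close>

lemma nn_integral_riesz_kernel_away_le:
  assumes [measurable]: "f \<in> borel_measurable borel" and f: "\<And>y. f y \<ge> 0"
    and M: "M\<^sub>\<alpha> f x \<le> ennreal c" and c: "c \<ge> 0" and r: "r > 0" and a: "a > 0"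
    and A: "A \<subseteq> ball x r" "\<And>y. y \<in> A \<Longrightarrow> a \<le> dist x' y"
  shows "(\<integral>\<^sup>+y. indicator A y * riesz_kernel f x' y \<partial>\<mu>)
    \<le> ennreal (c * measure \<mu> (ball x r) powr (\<beta> / N) / a powr \<beta>)"
proof -
  have "(\<integral>\<^sup>+y. indicator A y * riesz_kernel f x' y \<partial>\<mu>)
      \<le> (\<integral>\<^sup>+y. ennreal (1 / a powr \<beta>) * (indicator (ball x r) y * ennreal (f y)) \<partial>\<mu>)"
  proof (intro nn_integral_mono)
    fix y
    show "indicator A y * riesz_kernel f x' y \<le> ennreal (1 / a powr \<beta>) * (indicator (ball x r) y * ennreal (f y))"
    proof (cases "y \<in> A")
      case True
      then have "riesz_kernel f x' y \<le> ennreal (f y / a powr \<beta>)"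
        using a A f by (intro riesz_kernel_le) auto
      also have "\<dots> = ennreal (1 / a powr \<beta>) * ennreal (f y)" using f by (simp flip: ennreal_mult)
      finally show ?thesis using True A by auto
    qed simp
  qed
  also have "\<dots> = ennreal (1 / a powr \<beta>) * (\<integral>\<^sup>+y. indicator (ball x r) y * ennreal (f y) \<partial>\<mu>)"
    by (rule nn_integral_cmult) measurable
  also have "\<dots> \<le> ennreal (1 / a powr \<beta>) * ennreal (c * measure \<mu> (ball x r) powr (\<beta> / N))"
    using M c r f by (intro mult_left_mono nn_integral_ball_le_frac_maximal) auto
  also have "\<dots> = ennreal (c * measure \<mu> (ball x r) powr (\<beta> / N) / a powr \<beta>)"
    using c by (simp flip: ennreal_mult)
  finally show ?thesis .
qed

lemma nn_integral_outside_ball_riesz_kernel_le: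
  assumes [measurable]: "f \<in> borel_measurable borel" and f: "\<And>y. f y \<ge> 0"
    and d: "0 < d" "dist x z \<le> d" "dist x x' \<le> d / 20"
  shows "(\<integral>\<^sup>+y. indicator (- ball x (2 * d)) y * riesz_kernel f x' y \<partial>\<mu>) \<le> ennreal (3 powr \<beta>) * I\<^sub>\<alpha> f z"
proof -
  have "(\<integral>\<^sup>+y. indicator (- ball x (2 * d)) y * riesz_kernel f x' y \<partial>\<mu>)
      \<le> (\<integral>\<^sup>+y. ennreal (3 powr \<beta>) * riesz_kernel f z y \<partial>\<mu>)"
  proof (intro nn_integral_mono)
    fix y
    show "indicator (- ball x (2 * d)) y * riesz_kernel f x' y \<le> ennreal (3 powr \<beta>) * riesz_kernel f z y"
    proof (cases "y \<in> ball x (2 * d)")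
      case False
      have "dist x y \<le> dist x x' + dist x' y" "dist z y \<le> dist z x + dist x y" by (rule dist_triangle)+
      then have "0 < dist x' y" "dist z y \<le> 3 * dist x' y"
        using False d by (auto simp: dist_commute)
      then show ?thesis using False f by (simp add: riesz_kernel_le_rescaled)
    qed simp
  qed
  also have "\<dots> = ennreal (3 powr \<beta>) * I\<^sub>\<alpha> f z"
    unfolding riesz_potential_eq by (rule nn_integral_cmult) measurable
  finally show ?thesis .
qed

definition tail_const :: real where
  "tail_const = 3 powr \<beta> + C\<^sub>\<mu> powr (\<beta> / N) * 40 powr \<beta>
    + C\<^sub>\<mu> powr (\<beta> / N) * 20 powr \<beta> / (1 - decay_ratio)"

lemma tail_const_pos: "tail_const > 0"
  using decay_ratio_less_1 by (simp add: tail_const_def add_pos_nonneg)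

lemma nn_integral_shell_riesz_kernel_le:
  assumes [measurable]: "f \<in> borel_measurable borel" and f: "\<And>y. f y \<ge> 0"
    and t: "t > 0" and \<epsilon>: "0 \<le> \<epsilon>" "\<epsilon> \<le> 1" and M: "M\<^sub>\<alpha> f x \<le> ennreal (\<epsilon> * t)"
    and d: "d > 0" and x': "dist x x' \<le> radius d (Suc i) / 2"
    and fails: "\<forall>l<i. doubling_fails x d l"
  shows "(\<integral>\<^sup>+y. indicator (ball x (radius d i) - ball x (radius d (Suc i))) y * riesz_kernel f x' y \<partial>\<mu>)
    \<le> ennreal (C\<^sub>\<mu> powr (\<beta> / N) * 20 powr \<beta> * t * decay_ratio ^ i)"
proof -
  let ?m = "measure \<mu> (ball x (radius d i)) powr (\<beta> / N)"
  have "(\<integral>\<^sup>+y. indicator (ball x (radius d i) - ball x (radius d (Suc i))) y * riesz_kernel f x' y \<partial>\<mu>)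
      \<le> ennreal (\<epsilon> * t * ?m / (radius d (Suc i) / 2) powr \<beta>)"
  proof (rule nn_integral_riesz_kernel_away_le[OF _ f M])
    fix y assume "y \<in> ball x (radius d i) - ball x (radius d (Suc i))"
    then show "radius d (Suc i) / 2 \<le> dist x' y"
      using x' dist_triangle[of x y x'] by (simp add: dist_commute)
  qed (use \<epsilon> t d radius_pos in auto)
  also have "\<epsilon> * t * ?m / (radius d (Suc i) / 2) powr \<beta>
      = \<epsilon> * t * 2 powr \<beta> * (?m / radius d (Suc i) powr \<beta>)"
    by (simp add: powr_divide)
  also have "\<dots> \<le> \<epsilon> * t * 2 powr \<beta> * (decay_ratio ^ i * (10 powr \<beta> * C\<^sub>\<mu> powr (\<beta> / N)))"
    using \<epsilon> t by (intro mult_left_mono ball_measure_decay d fails) auto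
  also have "\<dots> \<le> C\<^sub>\<mu> powr (\<beta> / N) * 20 powr \<beta> * t * decay_ratio ^ i"
  proof -
    have "(2::real) powr \<beta> * 10 powr \<beta> = 20 powr \<beta>" by (simp flip: powr_mult)
    then have "\<epsilon> * t * 2 powr \<beta> * (decay_ratio ^ i * (10 powr \<beta> * C\<^sub>\<mu> powr (\<beta> / N)))
        = \<epsilon> * (C\<^sub>\<mu> powr (\<beta> / N) * 20 powr \<beta> * t * decay_ratio ^ i)"
      by (simp add: algebra_simps)
    also have "\<dots> \<le> C\<^sub>\<mu> powr (\<beta> / N) * 20 powr \<beta> * t * decay_ratio ^ i"
      using \<epsilon> t decay_ratio_pos by (intro mult_left_le_one_le) auto
    finally show ?thesis .
  qed
  finally show ?thesis by (simp add: ennreal_leI)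
qed

lemma nn_integral_middle_annulus_riesz_kernel_le:
  assumes [measurable]: "f \<in> borel_measurable borel" and f: "\<And>y. f y \<ge> 0"
    and t: "t > 0" and \<epsilon>: "0 \<le> \<epsilon>" "\<epsilon> \<le> 1" and M: "M\<^sub>\<alpha> f x \<le> ennreal (\<epsilon> * t)"
    and d: "d > 0" and x': "dist x x' \<le> d / 20"
  shows "(\<integral>\<^sup>+y. indicator (ball x (2 * d) - ball x (d / 10)) y * riesz_kernel f x' y \<partial>\<mu>)
    \<le> ennreal (C\<^sub>\<mu> powr (\<beta> / N) * 40 powr \<beta> * t)"
proof -
  have "(\<integral>\<^sup>+y. indicator (ball x (2 * d) - ball x (d / 10)) y * riesz_kernel f x' y \<partial>\<mu>)
      \<le> ennreal (\<epsilon> * t * measure \<mu> (ball x (2 * d)) powr (\<beta> / N) / (d / 20) powr \<beta>)"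
  proof (rule nn_integral_riesz_kernel_away_le[OF _ f M])
    fix y assume "y \<in> ball x (2 * d) - ball x (d / 10)"
    then show "d / 20 \<le> dist x' y"
      using x' dist_triangle[of x y x'] by (simp add: dist_commute)
  qed (use \<epsilon> t d in auto)
  also have "\<dots> \<le> ennreal (\<epsilon> * t * (C\<^sub>\<mu> powr (\<beta> / N) * (2 * d) powr \<beta>) / (d / 20) powr \<beta>)"
    using \<epsilon> t d beta_pos
    by (intro ennreal_leI divide_right_mono mult_left_mono measure_ball_powr_le) auto
  also have "\<epsilon> * t * (C\<^sub>\<mu> powr (\<beta> / N) * (2 * d) powr \<beta>) / (d / 20) powr \<beta>
      = \<epsilon> * (C\<^sub>\<mu> powr (\<beta> / N) * 40 powr \<beta> * t)"
  proof -
    have "\<epsilon> * t * (C\<^sub>\<mu> powr (\<beta> / N) * (2 * d) powr \<beta>) / (d / 20) powr \<beta>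
        = \<epsilon> * t * C\<^sub>\<mu> powr (\<beta> / N) * ((2 * d) powr \<beta> / (d / 20) powr \<beta>)"
      by (simp add: ac_simps)
    also have "(2 * d) powr \<beta> / (d / 20) powr \<beta> = 40 powr \<beta>"
      using d by (simp add: powr_divide[symmetric])
    finally show ?thesis by (simp add: ac_simps)
  qed
  also have "\<dots> \<le> C\<^sub>\<mu> powr (\<beta> / N) * 40 powr \<beta> * t"
    using \<epsilon> t by (intro mult_left_le_one_le) auto
  finally show ?thesis by (simp add: ennreal_leI)
qed

lemma riesz_potential_le_near_part:
  assumes [measurable]: "f \<in> borel_measurable borel" and f: "\<And>y. f y \<ge> 0"
    and t: "t > 0" and \<epsilon>: "0 \<le> \<epsilon>" "\<epsilon> \<le> 1" and M: "M\<^sub>\<alpha> f x \<le> ennreal (\<epsilon> * t)"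
    and Iz: "I\<^sub>\<alpha> f z \<le> ennreal t" and d: "d = dist x z" "d > 0"
    and [measurable]: "Near \<in> sets \<mu>"
    and cover: "ball x (radius d 0) \<subseteq> Near \<union> (\<Union>i\<in>{i. P i}. ball x (radius d i) - ball x (radius d (Suc i)))"
    and P: "\<And>i. P i \<Longrightarrow> dist x x' \<le> radius d (Suc i) / 2 \<and> (\<forall>l<i. doubling_fails x d l)"
    and x': "dist x x' \<le> radius d 0 / 2"
  shows "I\<^sub>\<alpha> f x' \<le> (\<integral>\<^sup>+y. indicator Near y * riesz_kernel f x' y \<partial>\<mu>) + ennreal (tail_const * t)"
proof -
  let ?k = "riesz_kernel f x'" and ?\<gamma> = "\<beta> / N"
  define S where "S i = (if P i then ball x (radius d i) - ball x (radius d (Suc i)) else {})" for i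
  have r0: "radius d 0 = d / 10" by (simp add: radius_def)
  have "I\<^sub>\<alpha> f x' = (\<integral>\<^sup>+y. indicator (ball x (d / 10)) y * ?k y
      + indicator (ball x (2 * d) - ball x (d / 10)) y * ?k y + indicator (- ball x (2 * d)) y * ?k y \<partial>\<mu>)"
    unfolding riesz_potential_eq using d(2) by (intro nn_integral_cong) (auto split: split_indicator)
  also have "\<dots> = (\<integral>\<^sup>+y. indicator (ball x (d / 10)) y * ?k y \<partial>\<mu>)
      + (\<integral>\<^sup>+y. indicator (ball x (2 * d) - ball x (d / 10)) y * ?k y \<partial>\<mu>)
      + (\<integral>\<^sup>+y. indicator (- ball x (2 * d)) y * ?k y \<partial>\<mu>)"
    by (simp add: nn_integral_add)
  also have "(\<integral>\<^sup>+y. indicator (ball x (d / 10)) y * ?k y \<partial>\<mu>)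
      \<le> (\<integral>\<^sup>+y. indicator Near y * ?k y \<partial>\<mu>) + (\<Sum>i. \<integral>\<^sup>+y. indicator (S i) y * ?k y \<partial>\<mu>)"
    using cover by (intro nn_integral_indicator_le_cover) (auto simp: S_def r0)
  also have "(\<Sum>i. \<integral>\<^sup>+y. indicator (S i) y * ?k y \<partial>\<mu>)
      \<le> (\<Sum>i. ennreal (C\<^sub>\<mu> powr ?\<gamma> * 20 powr \<beta> * t * decay_ratio ^ i))"
    using P f t \<epsilon> M d
    by (intro suminf_le summableI) (auto simp: S_def intro!: nn_integral_shell_riesz_kernel_le)
  also have "\<dots> = ennreal (C\<^sub>\<mu> powr ?\<gamma> * 20 powr \<beta> * t / (1 - decay_ratio))"
    using t decay_ratio_pos decay_ratio_less_1 by (intro suminf_ennreal_geometric) auto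
  also have "(\<integral>\<^sup>+y. indicator (ball x (2 * d) - ball x (d / 10)) y * ?k y \<partial>\<mu>)
      \<le> ennreal (C\<^sub>\<mu> powr ?\<gamma> * 40 powr \<beta> * t)"
    by (rule nn_integral_middle_annulus_riesz_kernel_le[OF _ f t \<epsilon> M d(2)]) (use x' r0 in auto)
  also have "(\<integral>\<^sup>+y. indicator (- ball x (2 * d)) y * ?k y \<partial>\<mu>) \<le> ennreal (3 powr \<beta>) * ennreal t"
    using x' r0 d Iz
    by (intro order_trans[OF nn_integral_outside_ball_riesz_kernel_le] mult_left_mono f) auto
  also have "(\<integral>\<^sup>+y. indicator Near y * ?k y \<partial>\<mu>) + ennreal (C\<^sub>\<mu> powr ?\<gamma> * 20 powr \<beta> * t / (1 - decay_ratio))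
      + ennreal (C\<^sub>\<mu> powr ?\<gamma> * 40 powr \<beta> * t) + ennreal (3 powr \<beta>) * ennreal t
      = (\<integral>\<^sup>+y. indicator Near y * ?k y \<partial>\<mu>) + ennreal (tail_const * t)"
    using t decay_ratio_less_1
    by (simp add: tail_const_def algebra_simps ennreal_mult[symmetric] ennreal_plus[symmetric]
        del: ennreal_plus)
  finally show ?thesis by (simp add: add_mono)
qed

lemma exists_doubling_radius:
  assumes [measurable]: "f \<in> borel_measurable borel" and f: "\<And>y. f y \<ge> 0"
    and t: "t > 0" and \<epsilon>: "0 \<le> \<epsilon>" "\<epsilon> \<le> 1" and M: "M\<^sub>\<alpha> f x \<le> ennreal (\<epsilon> * t)"
    and Iz: "I\<^sub>\<alpha> f z \<le> ennreal t" and d: "d = dist x z" "d > 0"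
    and Ix: "I\<^sub>\<alpha> f x > ennreal ((1 + tail_const) * t)"
  shows "\<exists>l. \<not> doubling_fails x d l"
proof (rule ccontr)
  assume "\<not> (\<exists>l. \<not> doubling_fails x d l)"
  then have "I\<^sub>\<alpha> f x \<le> (\<integral>\<^sup>+y. indicator {x} y * riesz_kernel f x y \<partial>\<mu>) + ennreal (tail_const * t)"
    using ball_minus_center_subset_shells[OF d(2), of x] d(2)
    by (intro riesz_potential_le_near_part[OF _ f t \<epsilon> M Iz d, where P = "\<lambda>_. True"])
      (auto intro: less_imp_le)
  also have "\<dots> < ennreal ((1 + tail_const) * t)"
    using t tail_const_pos by (simp add: nn_integral_indicator_singleton algebra_simps)
  finally show False using Ix by simp
qed

lemma riesz_potential_le_localized:
  assumes [measurable]: "f \<in> borel_measurable borel" and f: "\<And>y. f y \<ge> 0"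
    and t: "t > 0" and \<epsilon>: "0 \<le> \<epsilon>" "\<epsilon> \<le> 1" and M: "M\<^sub>\<alpha> f x \<le> ennreal (\<epsilon> * t)"
    and Iz: "I\<^sub>\<alpha> f z \<le> ennreal t" and d: "d = dist x z" "d > 0"
    and fails: "\<forall>l<j. doubling_fails x d l" and x': "dist x x' \<le> radius d j / 2"
  shows "I\<^sub>\<alpha> f x' \<le> I\<^sub>\<alpha> (\<lambda>y. indicator (ball x (radius d j)) y * f y) x' + ennreal (tail_const * t)"
proof -
  have "I\<^sub>\<alpha> f x' \<le> (\<integral>\<^sup>+y. indicator (ball x (radius d j)) y * riesz_kernel f x' y \<partial>\<mu>)
      + ennreal (tail_const * t)"
  proof (rule riesz_potential_le_near_part[OF _ f t \<epsilon> M Iz d, where P = "\<lambda>i. i < j"])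
    show "ball x (radius d 0) \<subseteq> ball x (radius d j)
        \<union> (\<Union>i\<in>{i. i < j}. ball x (radius d i) - ball x (radius d (Suc i)))"
    proof
      fix y assume y: "y \<in> ball x (radius d 0)"
      show "y \<in> ball x (radius d j) \<union> (\<Union>i\<in>{i. i < j}. ball x (radius d i) - ball x (radius d (Suc i)))"
      proof (cases "dist x y < radius d j")
        case False
        then have "y \<in> ball x (radius d 0) - {x}" using y d(2) by auto
        then obtain i where i: "y \<in> ball x (radius d i) - ball x (radius d (Suc i))"
          using ball_minus_center_subset_shells[OF d(2), of x] by blast
        then have "i < j" using False radius_antimono[OF d(2), of j i] by (cases "i < j") auto
        then show ?thesis using i by blast
      qed simp
    qed
    show "dist x x' \<le> radius d (Suc i) / 2 \<and> (\<forall>l<i. doubling_fails x d l)" if "i < j" for i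
      using that fails x' radius_antimono[OF d(2), of "Suc i" j] by auto
    show "dist x x' \<le> radius d 0 / 2" using x' radius_antimono[OF d(2), of 0 j] by simp
  qed measurable
  then show ?thesis by (simp add: riesz_kernel_indicator riesz_potential_eq)
qed

section \<open>The good-\<open>\<lambda>\<close> inequality\<close>

lemma emeasure_riesz_potential_gt_le_measure:
  assumes [measurable]: "g \<in> borel_measurable borel" and g: "\<And>y. g y \<ge> 0"
    and int: "(\<integral>\<^sup>+y. g y \<partial>\<mu>) \<le> ennreal (\<epsilon> * t * m powr (\<beta> / N))"
    and t: "t > 0" and \<epsilon>: "\<epsilon> \<ge> 0" and m: "m \<ge> 0"
  shows "emeasure \<mu> {x. I\<^sub>\<alpha> g x > ennreal t} \<le> ennreal (weak_type_const * \<epsilon> powr (N / \<beta>) * m)"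
proof -
  have "emeasure \<mu> {x. I\<^sub>\<alpha> g x > ennreal t}
      \<le> ennreal (weak_type_const * (\<epsilon> * t * m powr (\<beta> / N) / t) powr (N / \<beta>))"
    by (rule emeasure_riesz_potential_gt_le[OF _ g int t]) measurable
  also have "(\<epsilon> * t * m powr (\<beta> / N) / t) powr (N / \<beta>) = \<epsilon> powr (N / \<beta>) * m"
    using t \<epsilon> m beta_pos N_pos by (simp add: powr_mult powr_powr)
  finally show ?thesis by (simp add: mult.assoc)
qed

definition good_lambda_const :: real where
  "good_lambda_const = weak_type_const * doubling_const"

lemma good_lambda_const_pos: "good_lambda_const > 0"
  using weak_type_const_pos by (simp add: good_lambda_const_def doubling_const_def)

lemma emeasure_restricted_riesz_potential_gt_le:
  assumes [measurable]: "f \<in> borel_measurable borel" and f: "\<And>y. f y \<ge> 0"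
    and t: "t > 0" and \<epsilon>: "0 \<le> \<epsilon>" and M: "M\<^sub>\<alpha> f x \<le> ennreal (\<epsilon> * t)"
    and d: "d > 0" and doubling: "\<not> doubling_fails x d j"
  shows "emeasure \<mu> {y. I\<^sub>\<alpha> (\<lambda>y. indicator (ball x (radius d j)) y * f y) y > ennreal t}
    \<le> ennreal (good_lambda_const * \<epsilon> powr (N / \<beta>)) * emeasure \<mu> (ball x (radius d (Suc j)))"
proof -
  let ?m = "measure \<mu> (ball x (radius d j))"
  have "emeasure \<mu> {y. I\<^sub>\<alpha> (\<lambda>y. indicator (ball x (radius d j)) y * f y) y > ennreal t}
      \<le> ennreal (weak_type_const * \<epsilon> powr (N / \<beta>) * ?m)"
  proof (rule emeasure_riesz_potential_gt_le_measure)
    have "(\<integral>\<^sup>+y. indicator (ball x (radius d j)) y * f y \<partial>\<mu>)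
        = (\<integral>\<^sup>+y. indicator (ball x (radius d j)) y * ennreal (f y) \<partial>\<mu>)"
      by (intro nn_integral_cong) (simp add: indicator_def)
    also have "\<dots> \<le> ennreal (\<epsilon> * t * ?m powr (\<beta> / N))"
      using M t \<epsilon> d by (intro nn_integral_ball_le_frac_maximal f) auto
    finally show "(\<integral>\<^sup>+y. indicator (ball x (radius d j)) y * f y \<partial>\<mu>) \<le> ennreal (\<epsilon> * t * ?m powr (\<beta> / N))" .
  qed (use f t \<epsilon> in auto)
  also have "\<dots> \<le> ennreal (weak_type_const * \<epsilon> powr (N / \<beta>) * (doubling_const * measure \<mu> (ball x (radius d (Suc j)))))"
    using doubling weak_type_const_pos \<epsilon>
    by (intro ennreal_leI mult_left_mono) (auto simp: doubling_fails_def)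
  also have "\<dots> = ennreal (good_lambda_const * \<epsilon> powr (N / \<beta>)) * emeasure \<mu> (ball x (radius d (Suc j)))"
    using weak_type_const_pos
    by (simp add: good_lambda_const_def doubling_const_def emeasure_ball_eq ennreal_mult[symmetric] ac_simps)
  finally show ?thesis .
qed

lemma good_lambda_local:
  assumes [measurable]: "f \<in> borel_measurable borel" and f: "\<And>y. f y \<ge> 0"
    and t: "t > 0" and \<epsilon>: "0 \<le> \<epsilon>" "\<epsilon> \<le> 1" and M: "M\<^sub>\<alpha> f x \<le> ennreal (\<epsilon> * t)"
    and Ix: "I\<^sub>\<alpha> f x > ennreal ((1 + tail_const) * t)"
    and nonempty: "{y. I\<^sub>\<alpha> f y \<le> ennreal t} \<noteq> {}"
  shows "\<exists>\<rho>>0. \<rho> \<le> infdist x {y. I\<^sub>\<alpha> f y \<le> ennreal t} \<and>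
    (\<exists>G\<in>sets \<mu>. {y. I\<^sub>\<alpha> f y > ennreal ((1 + tail_const) * t)} \<inter> ball x (5 * \<rho>) \<subseteq> G \<and>
      emeasure \<mu> G \<le> ennreal (good_lambda_const * \<epsilon> powr (N / \<beta>)) * emeasure \<mu> (ball x \<rho>))"
proof -
  let ?Oc = "{y. I\<^sub>\<alpha> f y \<le> ennreal t}"
  have closed: "closed ?Oc" by (rule closed_riesz_potential_le[OF _ f]) measurable
  have "ennreal t \<le> ennreal ((1 + tail_const) * t)"
    using t tail_const_pos by (intro ennreal_leI) simp
  then have "x \<notin> ?Oc" using Ix by auto
  then have d: "infdist x ?Oc > 0" using closed nonempty by (rule infdist_pos_not_in_closed[rotated 2])
  obtain z where z: "z \<in> ?Oc" "infdist x ?Oc = dist x z" using infdist_attains_inf[OF closed nonempty] by blast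
  define d where "d = dist x z"
  have Iz: "I\<^sub>\<alpha> f z \<le> ennreal t" and d_pos: "d > 0" using z d by (auto simp: d_def)
  obtain j where j: "\<not> doubling_fails x d j" "\<forall>l<j. doubling_fails x d l"
    using exists_least_iff[of "\<lambda>l. \<not> doubling_fails x d l"]
      exists_doubling_radius[OF _ f t \<epsilon> M Iz d_def d_pos Ix] by auto
  define \<rho> where "\<rho> = radius d (Suc j)"
  define f\<^sub>j where "f\<^sub>j y = indicator (ball x (radius d j)) y * f y" for y
  have [measurable]: "f\<^sub>j \<in> borel_measurable borel" unfolding f\<^sub>j_def by measurable
  define G where "G = ball x (5 * \<rho>) \<inter> {y. I\<^sub>\<alpha> f\<^sub>j y > ennreal t}"
  have "\<rho> \<le> radius d 0" unfolding \<rho>_def using d_pos by (intro radius_antimono) auto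
  also have "radius d 0 \<le> d" using d_pos by (simp add: radius_def)
  finally have \<rho>: "0 < \<rho>" "\<rho> \<le> infdist x ?Oc" using d_pos z by (auto simp: \<rho>_def d_def)
  have "{y. I\<^sub>\<alpha> f y > ennreal ((1 + tail_const) * t)} \<inter> ball x (5 * \<rho>) \<subseteq> G"
  proof safe
    fix y assume y: "ennreal ((1 + tail_const) * t) < I\<^sub>\<alpha> f y" "y \<in> ball x (5 * \<rho>)"
    have "I\<^sub>\<alpha> f y \<le> I\<^sub>\<alpha> f\<^sub>j y + ennreal (tail_const * t)"
      unfolding f\<^sub>j_def using y(2) j(2)
      by (intro riesz_potential_le_localized[OF _ f t \<epsilon> M Iz d_def d_pos])
        (auto simp: \<rho>_def radius_Suc)
    with y(1) have "ennreal t + ennreal (tail_const * t) < I\<^sub>\<alpha> f\<^sub>j y + ennreal (tail_const * t)"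
      using t tail_const_pos by (simp add: algebra_simps ennreal_plus[symmetric] del: ennreal_plus)
    then show "y \<in> G"
      using y(2) by (simp add: G_def add.commute[of _ "ennreal (tail_const * t)"] ennreal_add_left_cancel_less)
  qed
  moreover have "G \<in> sets \<mu>" unfolding G_def by measurable
  moreover have "emeasure \<mu> G \<le> emeasure \<mu> {y. I\<^sub>\<alpha> f\<^sub>j y > ennreal t}"
    unfolding G_def by (intro emeasure_mono) measurable
  moreover have "\<dots> \<le> ennreal (good_lambda_const * \<epsilon> powr (N / \<beta>)) * emeasure \<mu> (ball x \<rho>)"
    unfolding f\<^sub>j_def \<rho>_def by (rule emeasure_restricted_riesz_potential_gt_le[OF assms(1) f t \<epsilon>(1) M d_pos j(1)])
  ultimately show ?thesis using \<rho> by (meson order_trans)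
qed

lemma good_lambda_whole_space:
  assumes [measurable]: "f \<in> borel_measurable borel" and f: "\<And>y. f y \<ge> 0"
    and t: "t > 0" and \<epsilon>: "0 < \<epsilon>" "\<epsilon> \<le> 1"
    and empty: "{y. I\<^sub>\<alpha> f y \<le> ennreal t} = {}"
  shows "emeasure \<mu> {x. I\<^sub>\<alpha> f x > ennreal ((1 + tail_const) * t) \<and> M\<^sub>\<alpha> f x \<le> ennreal (\<epsilon> * t)}
    \<le> ennreal (good_lambda_const * \<epsilon> powr (N / \<beta>)) * emeasure \<mu> {x. I\<^sub>\<alpha> f x > ennreal t}"
    (is "emeasure \<mu> ?E \<le> ennreal ?K * _")
proof -
  have UNIV: "{x. I\<^sub>\<alpha> f x > ennreal t} = UNIV" using empty by (auto simp: not_le)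
  show ?thesis
  proof (cases "emeasure \<mu> UNIV = \<infinity>")
    case True
    have "?K > 0" using good_lambda_const_pos \<epsilon> by simp
    then have "ennreal ?K * emeasure \<mu> {x. I\<^sub>\<alpha> f x > ennreal t} = \<infinity>"
      using True good_lambda_const_pos \<epsilon> by (simp add: UNIV ennreal_mult_top)
    then show ?thesis by simp
  next
    case False
    then have fin: "emeasure \<mu> UNIV < \<infinity>" by (simp add: less_top)
    show ?thesis
    proof (cases "?E = {}")
      case False
      then obtain x where x: "M\<^sub>\<alpha> f x \<le> ennreal (\<epsilon> * t)" by blast
      let ?m = "measure \<mu> UNIV"
      have "emeasure \<mu> ?E \<le> emeasure \<mu> {x. I\<^sub>\<alpha> f x > ennreal t}"
        by (intro emeasure_mono) (simp_all add: UNIV)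
      also have "\<dots> \<le> ennreal (weak_type_const * \<epsilon> powr (N / \<beta>) * ?m)"
        using x fin f t \<epsilon>
        by (intro emeasure_riesz_potential_gt_le_measure nn_integral_le_frac_maximal) auto
      also have "\<dots> \<le> ennreal (?K * ?m)"
        using weak_type_const_pos \<epsilon>
        by (intro ennreal_leI mult_right_mono) (simp_all add: good_lambda_const_def doubling_const_def)
      also have "\<dots> = ennreal ?K * emeasure \<mu> {x. I\<^sub>\<alpha> f x > ennreal t}"
        using fin good_lambda_const_pos
        by (simp add: UNIV ennreal_mult emeasure_eq_ennreal_measure less_top)
      finally show ?thesis .
    qed (simp only: emeasure_empty zero_le)
  qed
qed

lemma good_lambda_covering:
  assumes [measurable]: "f \<in> borel_measurable borel" and f: "\<And>y. f y \<ge> 0"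
    and t: "t > 0" and \<epsilon>: "0 < \<epsilon>" "\<epsilon> \<le> 1"
    and nonempty: "{y. I\<^sub>\<alpha> f y \<le> ennreal t} \<noteq> {}"
    and E_sets: "{x. I\<^sub>\<alpha> f x > ennreal ((1 + tail_const) * t) \<and> M\<^sub>\<alpha> f x \<le> ennreal (\<epsilon> * t)} \<in> sets \<mu>"
  shows "emeasure \<mu> {x. I\<^sub>\<alpha> f x > ennreal ((1 + tail_const) * t) \<and> M\<^sub>\<alpha> f x \<le> ennreal (\<epsilon> * t)}
    \<le> ennreal (good_lambda_const * \<epsilon> powr (N / \<beta>)) * emeasure \<mu> {x. I\<^sub>\<alpha> f x > ennreal t}"
    (is "emeasure \<mu> ?E \<le> ennreal ?K * emeasure \<mu> ?\<Omega>")
proof -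
  let ?Oc = "{y. I\<^sub>\<alpha> f y \<le> ennreal t}"
  let ?P = "\<lambda>x \<rho> G. \<rho> > 0 \<and> \<rho> \<le> infdist x ?Oc \<and> G \<in> sets \<mu> \<and>
      {y. I\<^sub>\<alpha> f y > ennreal ((1 + tail_const) * t)} \<inter> ball x (5 * \<rho>) \<subseteq> G \<and>
      emeasure \<mu> G \<le> ennreal ?K * emeasure \<mu> (ball x \<rho>)"
  obtain z where z: "z \<in> ?Oc" using nonempty by blast
  have "\<forall>x\<in>?E. \<exists>\<rho> G. ?P x \<rho> G"
  proof
    fix x assume "x \<in> ?E"
    then have "\<exists>\<rho>>0. \<rho> \<le> infdist x ?Oc \<and> (\<exists>G\<in>sets \<mu>.
        {y. I\<^sub>\<alpha> f y > ennreal ((1 + tail_const) * t)} \<inter> ball x (5 * \<rho>) \<subseteq> G \<and>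
        emeasure \<mu> G \<le> ennreal ?K * emeasure \<mu> (ball x \<rho>))"
      using \<epsilon> by (intro good_lambda_local[OF _ f t _ _ _ _ nonempty]) auto
    then show "\<exists>\<rho> G. ?P x \<rho> G" by blast
  qed
  from bchoice[OF this] obtain \<rho> where "\<forall>x\<in>?E. \<exists>G. ?P x (\<rho> x) G" ..
  from bchoice[OF this] obtain G where \<rho>G: "\<And>x. x \<in> ?E \<Longrightarrow> ?P x (\<rho> x) (G x)" by blast
  show ?thesis
  proof (rule emeasure_le_Vitali[OF _ _ E_sets, where \<rho> = \<rho> and G = G and B = "norm z"])
    fix x assume x: "x \<in> ?E"
    have "\<rho> x \<le> infdist x ?Oc" using \<rho>G[OF x] by blast
    also have "\<dots> \<le> dist x z" using z by (rule infdist_le)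
    also have "\<dots> \<le> norm z + norm x" using norm_triangle_ineq4[of x z] by (simp add: dist_norm)
    finally have "\<rho> x \<le> norm z + norm x" .
    moreover have "ball x (\<rho> x) \<subseteq> ?\<Omega>"
      using \<rho>G[OF x] infdist_le[of _ ?Oc x] by (force simp: not_le)
    ultimately show "0 < \<rho> x \<and> \<rho> x \<le> norm z + norm x \<and> ball x (\<rho> x) \<subseteq> ?\<Omega>"
      using \<rho>G[OF x] by blast
    show "G x \<in> sets \<mu> \<and> ?E \<inter> ball x (5 * \<rho> x) \<subseteq> G x
        \<and> emeasure \<mu> (G x) \<le> ennreal ?K * emeasure \<mu> (ball x (\<rho> x))"
      using \<rho>G[OF x] by blast
  qed simp_all
qed

lemma good_lambda_inequality:
  assumes "f \<in> borel_measurable borel" "\<And>y. f y \<ge> 0" "t > 0" "0 < \<epsilon>" "\<epsilon> \<le> 1"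
  shows "emeasure \<mu> {x. I\<^sub>\<alpha> f x > ennreal ((1 + tail_const) * t) \<and> M\<^sub>\<alpha> f x \<le> ennreal (\<epsilon> * t)}
    \<le> ennreal (good_lambda_const * \<epsilon> powr (N / \<beta>)) * emeasure \<mu> {x. I\<^sub>\<alpha> f x > ennreal t}"
    (is "emeasure \<mu> ?E \<le> _")
proof (cases "?E \<in> sets \<mu>")
  case E: True
  show ?thesis
  proof (cases "{y. I\<^sub>\<alpha> f y \<le> ennreal t} = {}")
    case True
    show ?thesis by (rule good_lambda_whole_space[OF assms True])
  next
    case False
    show ?thesis by (rule good_lambda_covering[OF assms False E])
  qed
next
  case False
  then have "emeasure \<mu> ?E = 0" by (rule emeasure_notin_sets)
  then show ?thesis by simp
qed

end

theorem mainTheorem1: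
  fixes \<mu> :: "'a::euclidean_space measure" and N :: nat and \<alpha> :: real
  assumes "N \<ge> 1" and "0 < \<alpha>" and "\<alpha> < real N"
    and "sets \<mu> = sets borel"
    and "\<And>K. compact K \<Longrightarrow> emeasure \<mu> K < \<infinity>"
    and "\<exists>C\<^sub>\<mu>. \<forall>x r. r > 0 \<longrightarrow> emeasure \<mu> (ball x r) \<le> ennreal (C\<^sub>\<mu> * r ^ N)"
  shows "\<exists>k C. k \<ge> 1 \<and> C \<ge> 0 \<and>
    (\<forall>f t \<epsilon>. f \<in> borel_measurable \<mu> \<and> (\<forall>y. f y \<ge> 0) \<and> t > 0 \<and> 0 < \<epsilon> \<and> \<epsilon> \<le> 1 \<longrightarrow>
       emeasure \<mu> {x. riesz_potential \<mu> N \<alpha> f x > ennreal (k * t)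
                     \<and> frac_maximal \<mu> N \<alpha> f x \<le> ennreal (\<epsilon> * t)}
       \<le> ennreal (C * \<epsilon> powr (real N / (real N - \<alpha>)))
          * emeasure \<mu> {x. riesz_potential \<mu> N \<alpha> f x > ennreal t})"
proof -
  obtain C where C: "\<And>x r. r > 0 \<Longrightarrow> emeasure \<mu> (ball x r) \<le> ennreal (C * r ^ N)"
    using assms(6) by blast
  interpret riesz_growth \<mu> N "max C 1" \<alpha>
  proof
    show "N \<ge> 1" "sets \<mu> = sets borel" "0 < \<alpha>" "\<alpha> < real N" by (fact assms)+
    show "max C 1 > 0" by simp
    fix x :: 'a and r :: real assume "r > 0"
    then have "ennreal (C * r ^ N) \<le> ennreal (max C 1 * r ^ N)"
      by (intro ennreal_leI mult_right_mono) auto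
    with C[OF \<open>r > 0\<close>] show "emeasure \<mu> (ball x r) \<le> ennreal (max C 1 * r ^ N)"
      by (rule order_trans)
  qed
  show ?thesis
  proof (intro exI conjI allI impI)
    show "1 \<le> 1 + tail_const" using tail_const_pos by simp
    show "0 \<le> good_lambda_const" using good_lambda_const_pos by simp
    fix f :: "'a \<Rightarrow> real" and t \<epsilon> :: real
    assume "f \<in> borel_measurable \<mu> \<and> (\<forall>y. f y \<ge> 0) \<and> t > 0 \<and> 0 < \<epsilon> \<and> \<epsilon> \<le> 1"
    then show "emeasure \<mu> {x. I\<^sub>\<alpha> f x > ennreal ((1 + tail_const) * t) \<and> M\<^sub>\<alpha> f x \<le> ennreal (\<epsilon> * t)}
        \<le> ennreal (good_lambda_const * \<epsilon> powr (N / \<beta>)) * emeasure \<mu> {x. I\<^sub>\<alpha> f x > ennreal t}"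
      by (intro good_lambda_inequality) (simp_all add: measurable_borel_iff)
  qed
qed

end
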